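(* Define $h:\mathbb N\to\mathbb N$ by $$h(n)=\begin{cases}\lfloor\varphi n\rfloor, & n\in R_{2,0}\cup R_{1,0},\\ \lfloor(\varphi-1) n+2\rfloor, & n\in R_{2,2},\\ \lfloor(\varphi-1) n-1\rfloor, & n\in R_{3,1}.\end{cases}$$ Then $h$ is an $R_{i,j}$-permutation of $\mathbb N$ of order $4$ (first values $2,3,4,1,8,5,11,12,7,16,\dots$). Moreover its powers are $R_{i,j}$-permutations given by $$h^2(n)=\begin{cases}\lfloor(\varphi+1) n-1\rfloor, & n\in R_{1,0},\\ n+2, & n\in R_{2,2},\\ n-2, & n\in R_{2,0},\\ \lfloor(2-\varphi) n+1\rfloor, & n\in R_{3,1},\end{cases}\qquad h^3(n)=h^{-1}(n)=\begin{cases}\lfloor\varphi n+3\rfloor, & n\in R_{2,2},\\ \lfloor\varphi n-2\rfloor, & n\in R_{1,0},\\ \lfloor(\varphi-1) n+1\rfloor, & n\in R_{3,1}\cup R_{2,0}.\end{cases}$$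
   Context: $\mathbb N=\{1,2,\dots\}$, $\varphi=\frac{1+\sqrt5}{2}$, $F$ the Fibonacci numbers ($F(0)=0,F(1)=F(2)=1$). For $i\in\mathbb Z^{\ge0},j\in\mathbb Z$, $R_{i,j}$ is the range of $n\mapsto F(i+1)\lfloor n\varphi\rfloor+F(i)n-j$, $n\in\mathbb N$. An $R_{i,j}$-permutation is a permutation $\pi$ of $\mathbb N$ defined piecewise on a finite partition of $\mathbb N$ into sets $R_{i,j}$, with $\pi(n)=\lfloor(a\varphi+b)n+c\rfloor$ on each piece for integers $a,b,c$ depending on the piece. Powers denote iterated composition. *)

theory Defs
  imports Complex_Main "HOL-Number_Theory.Fib"
begin

definition phi :: real where "phi = (1 + sqrt 5) / 2"

definition R :: "nat \<Rightarrow> int \<Rightarrow> int set" where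
  "R i j = {int (fib (i + 1)) * \<lfloor>real_of_int n * phi\<rfloor> + int (fib i) * n - j | n. n \<ge> 1}"

text \<open>A piece is (i, j, a, b, c): on R i j the map is n \<mapsto> floor((a phi + b) n + c).\<close>
definition piece_set :: "nat \<times> int \<times> int \<times> int \<times> int \<Rightarrow> int set" where
  "piece_set p = (case p of (i, j, a, b, c) \<Rightarrow> R i j)"

definition Rperm :: "(int \<Rightarrow> int) \<Rightarrow> bool" where
  "Rperm \<pi> \<longleftrightarrow> bij_betw \<pi> {1..} {1..} \<and>
     (\<exists>P :: (nat \<times> int \<times> int \<times> int \<times> int) set.
        finite P \<and>
        pairwise (\<lambda>p q. disjnt (piece_set p) (piece_set q)) P \<and>
        (\<Union>p\<in>P. piece_set p) = {1..} \<and>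
        (\<forall>(i, j, a, b, c) \<in> P. \<forall>n \<in> R i j.
           \<pi> n = \<lfloor>(of_int a * phi + of_int b) * of_int n + of_int c\<rfloor>))"

definition h :: "int \<Rightarrow> int" where
  "h n = (if n \<in> R 2 0 \<union> R 1 0 then \<lfloor>phi * of_int n\<rfloor>
          else if n \<in> R 2 2 then \<lfloor>(phi - 1) * of_int n + 2\<rfloor>
          else if n \<in> R 3 1 then \<lfloor>(phi - 1) * of_int n - 1\<rfloor>
          else n)"

end

(*
  Write A n = floor (n phi) for the lower Wythoff sequence and B n = A n + n for the upper one.
  Since 1/phi + 1/phi^2 = 1, Beatty's theorem says that the ranges of A and B partition the
  positive integers, and phi^2 = phi + 1 gives A (A n) = B n - 1 and A (B n) = A n + B n.
  Applying the partition inside A twice splits the positive integers into the ranges of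
  B, AB, AAB and AAA, which are exactly R 1 0, R 2 0, R 3 1 and R 2 2, and h acts as the 4-cycle
  B n -> AB n -> AAB n -> AAA n -> B n.  As floor ((a phi + b) x + c) is A x + b x + c for
  a = 1 and b x + c - A x - 1 for a = -1 (x <> 0), every formula claimed for h, h^2 and h^3
  becomes a linear identity in A n and n.
*)
theory Submission
  imports Defs "HOL-Computational_Algebra.Primes"
begin

section \<open>Beatty's theorem\<close>

lemma divide_add_divide_eq_self:
  fixes \<alpha> \<beta> x :: real
  assumes "1 / \<alpha> + 1 / \<beta> = 1"
  shows "x / \<alpha> + x / \<beta> = x"
proof -
  have "x / \<alpha> + x / \<beta> = x * (1 / \<alpha> + 1 / \<beta>)" by (simp add: distrib_left)
  with assms show ?thesis by simp
qed

lemma beatty_disjoint: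
  fixes \<alpha> \<beta> :: real
  assumes pos: "0 < \<alpha>" "0 < \<beta>" and sum: "1 / \<alpha> + 1 / \<beta> = 1"
    and irr: "\<And>j. of_int n * \<alpha> \<noteq> of_int j" "\<And>j. of_int k * \<beta> \<noteq> of_int j"
  shows "\<lfloor>of_int n * \<alpha>\<rfloor> \<noteq> \<lfloor>of_int k * \<beta>\<rfloor>"
proof
  define m where "m = \<lfloor>of_int n * \<alpha>\<rfloor>"
  assume "\<lfloor>of_int n * \<alpha>\<rfloor> = \<lfloor>of_int k * \<beta>\<rfloor>"
  then have "of_int m \<le> of_int n * \<alpha>" "of_int n * \<alpha> < of_int m + 1"
    "of_int m \<le> of_int k * \<beta>" "of_int k * \<beta> < of_int m + 1"
    unfolding m_def by linarith+
  then have "of_int m < of_int n * \<alpha>" "of_int n * \<alpha> < of_int m + 1"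
    "of_int m < of_int k * \<beta>" "of_int k * \<beta> < of_int m + 1"
    using irr[of m] by (simp_all add: order_less_le)
  then have "of_int m / \<alpha> < of_int n" "of_int n < (of_int m + 1) / \<alpha>"
    "of_int m / \<beta> < of_int k" "of_int k < (of_int m + 1) / \<beta>"
    using pos by (simp_all add: pos_divide_less_eq pos_less_divide_eq)
  moreover note divide_add_divide_eq_self[OF sum, of "of_int m"]
    divide_add_divide_eq_self[OF sum, of "of_int m + 1"]
  ultimately have "real_of_int m < of_int (n + k)" "real_of_int (n + k) < of_int (m + 1)"
    by simp_all
  then show False unfolding of_int_less_iff by linarith
qed

lemma beatty_cover:
  fixes \<alpha> \<beta> :: real
  assumes pos: "0 < \<alpha>" "0 < \<beta>" and sum: "1 / \<alpha> + 1 / \<beta> = 1"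
    and irr: "\<And>n j. n \<noteq> 0 \<Longrightarrow> of_int n * \<alpha> \<noteq> of_int j"
    and "1 \<le> m"
  shows "(\<exists>n\<ge>1. \<lfloor>of_int n * \<alpha>\<rfloor> = m) \<or> (\<exists>k\<ge>1. \<lfloor>of_int k * \<beta>\<rfloor> = m)"
proof -
  have split: "x / \<beta> = x - x / \<alpha>" for x
    using divide_add_divide_eq_self[OF sum, of x] by simp
  define n where "n = \<lfloor>of_int m / \<alpha>\<rfloor> + 1"
  have n: "of_int m / \<alpha> < of_int n" "of_int n \<le> of_int m / \<alpha> + 1"
    unfolding n_def by linarith+
  have "0 < of_int m / \<alpha>" using pos \<open>1 \<le> m\<close> by simp
  with n have "1 \<le> n" by simp
  have "of_int m < of_int n * \<alpha>" using n pos by (simp add: pos_divide_less_eq)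
  show ?thesis
  proof (cases "of_int n * \<alpha> < of_int m + 1")
    case True
    then have "\<lfloor>of_int n * \<alpha>\<rfloor> = m"
      using \<open>of_int m < of_int n * \<alpha>\<close> by (simp add: floor_eq_iff)
    with \<open>1 \<le> n\<close> show ?thesis by blast
  next
    case False
    then have "of_int m + 1 < of_int n * \<alpha>"
      using irr[of n "m + 1"] \<open>1 \<le> n\<close> by fastforce
    then have "(of_int m + 1) / \<alpha> < of_int n"
      using pos by (simp add: pos_divide_less_eq)
    define k where "k = m + 1 - n"
    have "of_int m / \<beta> \<le> of_int k" "of_int k < (of_int m + 1) / \<beta>"
      unfolding k_def split using n \<open>(of_int m + 1) / \<alpha> < of_int n\<close> by simp_all
    then have "of_int m \<le> of_int k * \<beta>" "of_int k * \<beta> < of_int m + 1"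
      using pos by (simp_all add: pos_divide_le_eq pos_less_divide_eq)
    then have "\<lfloor>of_int k * \<beta>\<rfloor> = m" by (simp add: floor_eq_iff)
    moreover have "0 < of_int k * \<beta>"
      using \<open>of_int m \<le> of_int k * \<beta>\<close> \<open>1 \<le> m\<close> by linarith
    then have "1 \<le> k"
      using pos by (simp add: zero_less_mult_iff)
    ultimately show ?thesis by blast
  qed
qed

lemma bij_betw_funpow_periodic:
  assumes "f ` S \<subseteq> S" and periodic: "\<And>x. x \<in> S \<Longrightarrow> (f ^^ Suc m) x = x"
  shows "bij_betw (f ^^ k) S S"
proof -
  have "(f ^^ m) ` S \<subseteq> S"
    using assms(1) by (induction m) auto
  moreover have "(f ^^ m) (f x) = x" if "x \<in> S" for x
    using periodic[OF that] by (simp only: funpow_Suc_right comp_apply)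
  moreover have "f ((f ^^ m) x) = x" if "x \<in> S" for x
    using periodic[OF that] by simp
  ultimately have "bij_betw f S S"
    using assms(1) by (intro bij_betw_byWitness[where f' = "f ^^ m"]) simp_all
  then show ?thesis
    by (rule bij_betw_funpow)
qed

lemma funpow_eq_inv_into_periodic:
  assumes "f ` S \<subseteq> S" and periodic: "\<And>x. x \<in> S \<Longrightarrow> (f ^^ Suc m) x = x" and "x \<in> S"
  shows "(f ^^ m) x = inv_into S f x"
proof -
  have "bij_betw f S S" "(f ^^ m) x \<in> S"
    using bij_betw_funpow_periodic[OF assms(1,2), of 1] bij_betw_funpow_periodic[OF assms(1,2), of m]
      \<open>x \<in> S\<close> by (auto dest: bij_betw_apply)
  moreover have "f ((f ^^ m) x) = x"
    using periodic[OF \<open>x \<in> S\<close>] by simp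
  ultimately show ?thesis
    by (metis bij_betw_imp_inj_on inv_into_f_f)
qed

section \<open>The golden ratio\<close>

lemma square_neq_5_times_square:
  fixes m n :: int
  assumes "n \<noteq> 0"
  shows "m\<^sup>2 \<noteq> 5 * n\<^sup>2"
proof
  assume eq: "m\<^sup>2 = 5 * n\<^sup>2"
  have "prime (5::int)" by simp
  with assms eq have "m \<noteq> 0" by auto
  have "multiplicity 5 (m\<^sup>2) = 2 * multiplicity 5 m"
    using \<open>prime (5::int)\<close> \<open>m \<noteq> 0\<close> by (simp add: prime_elem_multiplicity_power_distrib)
  moreover have "multiplicity 5 (5 * n\<^sup>2) = Suc (2 * multiplicity 5 n)"
    using \<open>prime (5::int)\<close> assms
    by (simp add: prime_elem_multiplicity_mult_distrib prime_elem_multiplicity_power_distrib)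
  ultimately have "2 * multiplicity 5 m = Suc (2 * multiplicity 5 n)" using eq by simp
  then show False by presburger
qed

lemma phi_squared: "phi\<^sup>2 = phi + 1"
  unfolding phi_def by (simp add: power2_eq_square field_simps)

lemma phi_bounds: "3/2 < phi" "phi < 5/3"
proof -
  have "2 < sqrt 5" by (rule real_less_rsqrt) simp
  moreover have "sqrt 5 < sqrt ((7/3)\<^sup>2)" by (rule real_sqrt_less_mono) (simp add: power2_eq_square)
  ultimately show "3/2 < phi" "phi < 5/3" unfolding phi_def by simp_all
qed

lemma of_int_mult_phi_neq_of_int:
  assumes "n \<noteq> 0"
  shows "of_int n * phi \<noteq> of_int k"
proof
  assume "of_int n * phi = of_int k"
  then have "sqrt 5 * of_int n = of_int (2 * k - n)"
    unfolding phi_def by (simp add: field_simps)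
  then have "(of_int (2 * k - n))\<^sup>2 = (5 * (of_int n)\<^sup>2 :: real)"
    by (metis power_mult_distrib real_sqrt_pow2 zero_le_numeral)
  then have "(2 * k - n)\<^sup>2 = 5 * n\<^sup>2"
    by (metis of_int_eq_iff of_int_mult of_int_numeral of_int_power)
  with square_neq_5_times_square[OF assms] show False by blast
qed

lemma phi_beatty_condition: "1 / phi + 1 / (phi + 1) = 1"
  using phi_squared phi_bounds by (simp add: field_simps power2_eq_square)

section \<open>The lower Wythoff sequence\<close>

definition lower_wythoff :: "int \<Rightarrow> int" where
  "lower_wythoff n = \<lfloor>of_int n * phi\<rfloor>"

lemma lower_wythoff_le: "of_int (lower_wythoff n) \<le> of_int n * phi"
  unfolding lower_wythoff_def by simp

lemma lower_wythoff_less: "n \<noteq> 0 \<Longrightarrow> of_int (lower_wythoff n) < of_int n * phi"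
  using lower_wythoff_le of_int_mult_phi_neq_of_int by (metis order_le_imp_less_or_eq)

lemma less_lower_wythoff_add_1: "of_int n * phi < of_int (lower_wythoff n) + 1"
  unfolding lower_wythoff_def by linarith

lemma strict_mono_lower_wythoff: "strict_mono lower_wythoff"
proof
  fix m n :: int
  assume "m < n"
  then have "(of_int m + 1) * phi \<le> of_int n * phi"
    using phi_bounds by (intro mult_right_mono) simp_all
  then have "of_int m * phi + 1 \<le> of_int n * phi"
    using phi_bounds by (simp add: distrib_right)
  then have "\<lfloor>of_int m * phi + 1\<rfloor> \<le> lower_wythoff n"
    unfolding lower_wythoff_def by (rule floor_mono)
  then show "lower_wythoff m < lower_wythoff n"
    unfolding lower_wythoff_def by simp
qed

lemma le_lower_wythoff: "0 \<le> n \<Longrightarrow> n \<le> lower_wythoff n"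
  unfolding lower_wythoff_def le_floor_iff
  using mult_left_mono[of 1 phi "of_int n"] phi_bounds by simp

lemma lower_wythoff_pos: "1 \<le> n \<Longrightarrow> 1 \<le> lower_wythoff n"
  using le_lower_wythoff[of n] by simp

lemma lower_wythoff_values:
  "lower_wythoff 1 = 1" "lower_wythoff 2 = 3" "lower_wythoff 3 = 4" "lower_wythoff 4 = 6"
  unfolding lower_wythoff_def floor_eq_iff using phi_bounds by simp_all

lemma floor_phi_affine: "\<lfloor>(phi + of_int b) * of_int x + of_int c\<rfloor> = lower_wythoff x + b * x + c"
proof -
  have eq: "(phi + of_int b) * of_int x + of_int c = of_int x * phi + of_int (b * x + c)"
    by (simp add: algebra_simps)
  show ?thesis
    unfolding eq lower_wythoff_def floor_add_int by simp
qed

lemma floor_affine_minus_phi: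
  assumes "x \<noteq> 0"
  shows "\<lfloor>(of_int b - phi) * of_int x + of_int c\<rfloor> = b * x + c - lower_wythoff x - 1"
proof -
  have "(of_int b - phi) * of_int x + of_int c = of_int (b * x + c) - of_int x * phi"
    by (simp add: algebra_simps)
  then show ?thesis
    unfolding floor_eq_iff
    using lower_wythoff_less[OF assms] less_lower_wythoff_add_1[of x] by simp
qed

lemma floor_mult_phi_plus_1: "\<lfloor>of_int k * (phi + 1)\<rfloor> = lower_wythoff k + k"
  unfolding lower_wythoff_def by (simp add: distrib_left)

lemma mult_mem_unit_interval:
  fixes t c :: real
  assumes "0 \<le> t" "t < 1" "0 \<le> c" "c \<le> 1"
  shows "0 \<le> t * c" "t * c < 1"
  using assms mult_left_mono[of c 1 t] by simp_all

lemma lower_wythoff_add_self: "lower_wythoff (lower_wythoff n + n) = 2 * lower_wythoff n + n"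
proof -
  define t where "t = of_int n * phi - of_int (lower_wythoff n)"
  have t: "0 \<le> t" "t < 1"
    unfolding t_def using lower_wythoff_le less_lower_wythoff_add_1 by (simp_all add: algebra_simps)
  have "of_int (lower_wythoff n + n) * phi - (of_int (2 * lower_wythoff n + n) + t * (2 - phi))
      = of_int n * (phi\<^sup>2 - phi - 1)"
    unfolding t_def by (simp add: algebra_simps power2_eq_square)
  then have eq: "of_int (lower_wythoff n + n) * phi = of_int (2 * lower_wythoff n + n) + t * (2 - phi)"
    using phi_squared by simp
  have "0 \<le> t * (2 - phi)" "t * (2 - phi) < 1"
    using mult_mem_unit_interval[OF t, of "2 - phi"] phi_bounds by simp_all
  then show ?thesis
    unfolding lower_wythoff_def[of "lower_wythoff n + n"] eq floor_eq_iff by simp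
qed

lemma lower_wythoff_lower_wythoff:
  assumes "n \<noteq> 0"
  shows "lower_wythoff (lower_wythoff n) = lower_wythoff n + n - 1"
proof -
  define t where "t = of_int n * phi - of_int (lower_wythoff n)"
  have t: "0 \<le> t" "t < 1"
    unfolding t_def using lower_wythoff_less[OF assms] less_lower_wythoff_add_1
    by (simp_all add: algebra_simps)
  have "of_int (lower_wythoff n) * phi - (of_int (lower_wythoff n + n - 1) + (1 - t * (phi - 1)))
      = of_int n * (phi\<^sup>2 - phi - 1)"
    unfolding t_def by (simp add: algebra_simps power2_eq_square)
  then have eq: "of_int (lower_wythoff n) * phi = of_int (lower_wythoff n + n - 1) + (1 - t * (phi - 1))"
    using phi_squared by simp
  have "0 < t"
    unfolding t_def using lower_wythoff_less[OF assms] by simp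
  then have "0 < t * (phi - 1)" "t * (phi - 1) < 1"
    using mult_mem_unit_interval[OF t, of "phi - 1"] phi_bounds by simp_all
  then show ?thesis
    unfolding lower_wythoff_def[of "lower_wythoff n"] eq floor_eq_iff by simp
qed

lemma lower_wythoff_iterates:
  assumes "1 \<le> n"
  shows "lower_wythoff (2 * lower_wythoff n + n) = 3 * lower_wythoff n + 2 * n - 1"
    and "lower_wythoff (3 * lower_wythoff n + 2 * n - 1) = 5 * lower_wythoff n + 3 * n - 2"
    and "lower_wythoff (lower_wythoff n + n - 1) = 2 * lower_wythoff n + n - 2"
    and "lower_wythoff (2 * lower_wythoff n + n - 2) = 3 * lower_wythoff n + 2 * n - 4"
proof -
  let ?a = "lower_wythoff n"
  have "n \<le> ?a" using le_lower_wythoff assms by simp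
  show 1: "lower_wythoff (2 * ?a + n) = 3 * ?a + 2 * n - 1"
    using lower_wythoff_lower_wythoff[of "?a + n"] lower_wythoff_add_self[of n] \<open>n \<le> ?a\<close> assms
    by simp
  show "lower_wythoff (3 * ?a + 2 * n - 1) = 5 * ?a + 3 * n - 2"
    using lower_wythoff_lower_wythoff[of "2 * ?a + n"] 1 \<open>n \<le> ?a\<close> assms by simp
  show 3: "lower_wythoff (?a + n - 1) = 2 * ?a + n - 2"
    using lower_wythoff_lower_wythoff[of ?a] lower_wythoff_lower_wythoff[of n] \<open>n \<le> ?a\<close> assms
    by simp
  show "lower_wythoff (2 * ?a + n - 2) = 3 * ?a + 2 * n - 4"
    using lower_wythoff_lower_wythoff[of "?a + n - 1"] 3 \<open>n \<le> ?a\<close> assms by simp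
qed

lemma lower_wythoff_neq_upper:
  assumes "n \<noteq> 0" "k \<noteq> 0"
  shows "lower_wythoff n \<noteq> lower_wythoff k + k"
proof -
  have "of_int k * (phi + 1) \<noteq> of_int j" for j
    using of_int_mult_phi_neq_of_int[OF assms(2), of "j - k"] by (auto simp: algebra_simps)
  then show ?thesis
    using beatty_disjoint[OF _ _ phi_beatty_condition, of n k] of_int_mult_phi_neq_of_int[OF assms(1)]
      phi_bounds
    unfolding floor_mult_phi_plus_1 lower_wythoff_def by fastforce
qed

lemma lower_or_upper_wythoff:
  assumes "1 \<le> m"
  shows "(\<exists>n\<ge>1. lower_wythoff n = m) \<or> (\<exists>k\<ge>1. lower_wythoff k + k = m)"
  using beatty_cover[OF _ _ phi_beatty_condition of_int_mult_phi_neq_of_int assms] phi_bounds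
  unfolding floor_mult_phi_plus_1 lower_wythoff_def by fastforce

section \<open>The four pieces\<close>

lemma R_eq_image:
  "R 1 0 = (\<lambda>n. lower_wythoff n + n) ` {1..}"
  "R 2 0 = (\<lambda>n. 2 * lower_wythoff n + n) ` {1..}"
  "R 2 2 = (\<lambda>n. 2 * lower_wythoff n + n - 2) ` {1..}"
  "R 3 1 = (\<lambda>n. 3 * lower_wythoff n + 2 * n - 1) ` {1..}"
  unfolding R_def lower_wythoff_def by (auto simp: numeral_eq_Suc)

lemma R_eq_lower_wythoff_image:
  "R 2 0 = lower_wythoff ` R 1 0"
  "R 3 1 = lower_wythoff ` R 2 0"
  "R 2 2 = lower_wythoff ` lower_wythoff ` lower_wythoff ` {1..}"
proof -
  have "lower_wythoff (lower_wythoff (lower_wythoff n)) = 2 * lower_wythoff n + n - 2" if "1 \<le> n" for n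
    using lower_wythoff_lower_wythoff[of n] lower_wythoff_iterates(3)[OF that] that by simp
  then show "R 2 0 = lower_wythoff ` R 1 0" "R 3 1 = lower_wythoff ` R 2 0"
    "R 2 2 = lower_wythoff ` lower_wythoff ` lower_wythoff ` {1..}"
    unfolding R_eq_image image_image
    by (simp_all add: lower_wythoff_add_self lower_wythoff_iterates cong: image_cong_simp)
qed

lemma lower_wythoff_image_Un_R_1_0: "lower_wythoff ` {1..} \<union> R 1 0 = {1..}"
proof (intro equalityI subsetI)
  fix m assume "m \<in> lower_wythoff ` {1..} \<union> R 1 0"
  then obtain n where "1 \<le> n" "m = lower_wythoff n \<or> m = lower_wythoff n + n"
    unfolding R_eq_image by blast
  then show "m \<in> {1..}"
    using lower_wythoff_pos[of n] by auto
next
  fix m :: int assume "m \<in> {1..}"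
  then consider n where "1 \<le> n" "m = lower_wythoff n" | k where "1 \<le> k" "m = lower_wythoff k + k"
    using lower_or_upper_wythoff[of m] by auto
  then show "m \<in> lower_wythoff ` {1..} \<union> R 1 0"
    unfolding R_eq_image by cases auto
qed

lemma R_1_0_Int_lower_wythoff_image:
  assumes "X \<subseteq> {1..}"
  shows "R 1 0 \<inter> lower_wythoff ` X = {}"
proof -
  have False if x: "x \<in> R 1 0" "x \<in> lower_wythoff ` X" for x
  proof -
    obtain k n where "1 \<le> k" "x = lower_wythoff k + k" "n \<in> X" "x = lower_wythoff n"
      using x unfolding R_eq_image by blast
    then show False
      using lower_wythoff_neq_upper[of n k] assms by auto
  qed
  then show ?thesis by blast
qed

lemma R_pieces_cover: "R 1 0 \<union> R 2 0 \<union> R 3 1 \<union> R 2 2 = {1..}"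
proof -
  let ?L = "image lower_wythoff"
  have LN: "?L {1..} = ?L (?L {1..}) \<union> R 2 0"
    by (metis R_eq_lower_wythoff_image(1) image_Un lower_wythoff_image_Un_R_1_0)
  have LLN: "?L (?L {1..}) = ?L (?L (?L {1..})) \<union> R 3 1"
    by (metis LN R_eq_lower_wythoff_image(2) image_Un)
  have "{1..} = ?L {1..} \<union> R 1 0"
    by (rule lower_wythoff_image_Un_R_1_0[symmetric])
  also have "\<dots> = ?L (?L {1..}) \<union> R 2 0 \<union> R 1 0"
    by (simp only: LN[symmetric])
  also have "\<dots> = ?L (?L (?L {1..})) \<union> R 3 1 \<union> R 2 0 \<union> R 1 0"
    by (simp only: LLN[symmetric])
  finally show ?thesis
    using R_eq_lower_wythoff_image(3) by blast
qed

lemma R_pieces_disjoint: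
  "R 1 0 \<inter> R 2 0 = {}" "R 1 0 \<inter> R 3 1 = {}" "R 1 0 \<inter> R 2 2 = {}"
  "R 2 0 \<inter> R 3 1 = {}" "R 2 0 \<inter> R 2 2 = {}" "R 3 1 \<inter> R 2 2 = {}"
proof -
  let ?L = "image lower_wythoff"
  have Int_image: "?L X \<inter> ?L Y = ?L (X \<inter> Y)" for X Y
    using strict_mono_lower_wythoff by (simp add: image_Int strict_mono_imp_inj_on)
  have LN: "?L {1..} \<subseteq> {1..}"
    using lower_wythoff_image_Un_R_1_0 by blast
  then have LLN: "?L (?L {1..}) \<subseteq> {1..}"
    by (meson image_mono order_trans)
  have R10: "R 1 0 \<subseteq> {1..}" and R20: "R 2 0 \<subseteq> {1..}"
    using R_pieces_cover by blast+
  note R_1_0_Int = R_1_0_Int_lower_wythoff_image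
  show R10_R20: "R 1 0 \<inter> R 2 0 = {}"
    unfolding R_eq_lower_wythoff_image(1) using R_1_0_Int[OF R10] .
  show "R 1 0 \<inter> R 3 1 = {}"
    unfolding R_eq_lower_wythoff_image(2) using R_1_0_Int[OF R20] .
  show "R 1 0 \<inter> R 2 2 = {}"
    unfolding R_eq_lower_wythoff_image(3) using R_1_0_Int[OF LLN] .
  have "R 2 0 \<inter> R 3 1 = ?L (R 1 0 \<inter> R 2 0)"
    by (simp only: Int_image R_eq_lower_wythoff_image)
  then show "R 2 0 \<inter> R 3 1 = {}"
    using R10_R20 by simp
  have "R 2 0 \<inter> R 2 2 = ?L (R 1 0 \<inter> ?L (?L {1..}))"
    by (simp only: Int_image R_eq_lower_wythoff_image)
  then show "R 2 0 \<inter> R 2 2 = {}"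
    using R_1_0_Int[OF LN] by simp
  have "R 3 1 \<inter> R 2 2 = ?L (?L (R 1 0 \<inter> ?L {1..}))"
    by (simp only: Int_image R_eq_lower_wythoff_image)
  then show "R 3 1 \<inter> R 2 2 = {}"
    using R_1_0_Int[of "{1..}"] by simp
qed

lemma R_pieces_cases:
  assumes "1 \<le> x"
  obtains n where "1 \<le> n" "x = lower_wythoff n + n"
    | n where "1 \<le> n" "x = 2 * lower_wythoff n + n"
    | n where "1 \<le> n" "x = 3 * lower_wythoff n + 2 * n - 1"
    | n where "1 \<le> n" "x = 2 * lower_wythoff n + n - 2"
proof -
  have "x \<in> R 1 0 \<or> x \<in> R 2 0 \<or> x \<in> R 3 1 \<or> x \<in> R 2 2"
    using assms R_pieces_cover by blast
  then show thesis
    using that unfolding R_eq_image by auto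
qed

definition phi_affine_on :: "int set \<Rightarrow> (int \<Rightarrow> int) \<Rightarrow> bool" where
  "phi_affine_on S f \<longleftrightarrow>
     (\<exists>a b c. \<forall>n\<in>S. f n = \<lfloor>(of_int a * phi + of_int b) * of_int n + of_int c\<rfloor>)"

lemma phi_affine_onI:
  "(\<And>n. n \<in> S \<Longrightarrow> f n = \<lfloor>(of_int a * phi + of_int b) * of_int n + of_int c\<rfloor>) \<Longrightarrow>
    phi_affine_on S f"
  unfolding phi_affine_on_def by blast

lemma Rperm_if_phi_affine_on_pieces:
  assumes "bij_betw f {1..} {1..}"
    and "phi_affine_on (R 1 0) f" "phi_affine_on (R 2 0) f"
    and "phi_affine_on (R 2 2) f" "phi_affine_on (R 3 1) f"
  shows "Rperm f"
proof -
  obtain a1 b1 c1 a2 b2 c2 a3 b3 c3 a4 b4 c4 where affine: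
    "\<forall>n\<in>R 1 0. f n = \<lfloor>(of_int a1 * phi + of_int b1) * of_int n + of_int c1\<rfloor>"
    "\<forall>n\<in>R 2 0. f n = \<lfloor>(of_int a2 * phi + of_int b2) * of_int n + of_int c2\<rfloor>"
    "\<forall>n\<in>R 2 2. f n = \<lfloor>(of_int a3 * phi + of_int b3) * of_int n + of_int c3\<rfloor>"
    "\<forall>n\<in>R 3 1. f n = \<lfloor>(of_int a4 * phi + of_int b4) * of_int n + of_int c4\<rfloor>"
    using assms(2-5) unfolding phi_affine_on_def by metis
  define P :: "(nat \<times> int \<times> int \<times> int \<times> int) set" where
    "P = {(1, 0, a1, b1, c1), (2, 0, a2, b2, c2), (2, 2, a3, b3, c3), (3, 1, a4, b4, c4)}"
  have "pairwise (\<lambda>p q. disjnt (piece_set p) (piece_set q)) P"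
    unfolding P_def pairwise_def piece_set_def disjnt_def
    using R_pieces_disjoint by (auto simp: Int_commute)
  moreover have "(\<Union>p\<in>P. piece_set p) = {1..}"
    unfolding P_def piece_set_def using R_pieces_cover by auto
  moreover have "\<forall>(i, j, a, b, c) \<in> P. \<forall>n \<in> R i j.
      f n = \<lfloor>(of_int a * phi + of_int b) * of_int n + of_int c\<rfloor>"
    unfolding P_def using affine by blast
  ultimately show ?thesis
    unfolding Rperm_def using assms(1) by (intro conjI exI[of _ P]) (simp_all add: P_def)
qed

section \<open>The permutation h\<close>

lemma h_on_pieces:
  "x \<in> R 1 0 \<Longrightarrow> h x = \<lfloor>phi * of_int x\<rfloor>"
  "x \<in> R 2 0 \<Longrightarrow> h x = \<lfloor>phi * of_int x\<rfloor>"
  "x \<in> R 2 2 \<Longrightarrow> h x = \<lfloor>(phi - 1) * of_int x + 2\<rfloor>"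
  "x \<in> R 3 1 \<Longrightarrow> h x = \<lfloor>(phi - 1) * of_int x - 1\<rfloor>"
  unfolding h_def using R_pieces_disjoint by auto

lemma h_cycle:
  assumes "1 \<le> n"
  shows "h (lower_wythoff n + n) = 2 * lower_wythoff n + n"
    and "h (2 * lower_wythoff n + n) = 3 * lower_wythoff n + 2 * n - 1"
    and "h (3 * lower_wythoff n + 2 * n - 1) = 2 * lower_wythoff n + n - 2"
    and "h (2 * lower_wythoff n + n - 2) = lower_wythoff n + n"
proof -
  have mem: "lower_wythoff n + n \<in> R 1 0" "2 * lower_wythoff n + n \<in> R 2 0"
    "2 * lower_wythoff n + n - 2 \<in> R 2 2" "3 * lower_wythoff n + 2 * n - 1 \<in> R 3 1"
    using assms unfolding R_eq_image by auto
  have floor_phi: "\<lfloor>phi * of_int x\<rfloor> = lower_wythoff x"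
    and floor_phi_minus_1: "\<lfloor>(phi - 1) * of_int x + of_int c\<rfloor> = lower_wythoff x - x + c" for x c
    using floor_phi_affine[of 0 x 0] floor_phi_affine[of "-1" x c] by (simp_all add: mult.commute)
  show "h (lower_wythoff n + n) = 2 * lower_wythoff n + n"
    using h_on_pieces(1)[OF mem(1)] floor_phi[of "lower_wythoff n + n"]
    by (simp add: lower_wythoff_add_self)
  show "h (2 * lower_wythoff n + n) = 3 * lower_wythoff n + 2 * n - 1"
    using h_on_pieces(2)[OF mem(2)] floor_phi[of "2 * lower_wythoff n + n"]
    by (simp add: lower_wythoff_iterates assms)
  show "h (3 * lower_wythoff n + 2 * n - 1) = 2 * lower_wythoff n + n - 2"
    using h_on_pieces(4)[OF mem(4)] floor_phi_minus_1[of "3 * lower_wythoff n + 2 * n - 1" "-1"]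
    by (simp add: lower_wythoff_iterates assms)
  show "h (2 * lower_wythoff n + n - 2) = lower_wythoff n + n"
    using h_on_pieces(3)[OF mem(3)] floor_phi_minus_1[of "2 * lower_wythoff n + n - 2" 2]
    by (simp add: lower_wythoff_iterates assms)
qed

lemma h_funpow_4: "1 \<le> x \<Longrightarrow> (h ^^ 4) x = x"
  by (erule R_pieces_cases) (simp_all add: h_cycle eval_nat_numeral)

lemma h_periodic: "x \<in> {1..} \<Longrightarrow> (h ^^ Suc 3) x = x"
  using h_funpow_4 by (simp add: numeral_eq_Suc)

lemma h_pos: "1 \<le> x \<Longrightarrow> 1 \<le> h x"
  by (erule R_pieces_cases; frule lower_wythoff_pos; simp add: h_cycle)

lemma h_maps_pos: "h ` {1..} \<subseteq> {1..}"
  using h_pos by auto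

lemma h_powers_on_R_1_0:
  assumes "x \<in> R 1 0"
  shows "(h ^^ 2) x = \<lfloor>(phi + 1) * of_int x - 1\<rfloor>" and "(h ^^ 3) x = \<lfloor>phi * of_int x - 2\<rfloor>"
proof -
  obtain n where n: "1 \<le> n" "x = lower_wythoff n + n"
    using assms unfolding R_eq_image by blast
  show "(h ^^ 2) x = \<lfloor>(phi + 1) * of_int x - 1\<rfloor>"
    using floor_phi_affine[of 1 x "-1"] n
    by (simp add: h_cycle eval_nat_numeral lower_wythoff_add_self)
  show "(h ^^ 3) x = \<lfloor>phi * of_int x - 2\<rfloor>"
    using floor_phi_affine[of 0 x "-2"] n
    by (simp add: h_cycle eval_nat_numeral lower_wythoff_add_self)
qed

lemma h_powers_on_R_2_0:
  assumes "x \<in> R 2 0"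
  shows "(h ^^ 2) x = x - 2" and "(h ^^ 3) x = \<lfloor>(phi - 1) * of_int x + 1\<rfloor>"
proof -
  obtain n where n: "1 \<le> n" "x = 2 * lower_wythoff n + n"
    using assms unfolding R_eq_image by blast
  then show "(h ^^ 2) x = x - 2"
    by (simp add: h_cycle eval_nat_numeral)
  show "(h ^^ 3) x = \<lfloor>(phi - 1) * of_int x + 1\<rfloor>"
    using floor_phi_affine[of "-1" x 1] n
    by (simp add: h_cycle eval_nat_numeral lower_wythoff_iterates)
qed

lemma h_powers_on_R_2_2:
  assumes "x \<in> R 2 2"
  shows "(h ^^ 2) x = x + 2" and "(h ^^ 3) x = \<lfloor>phi * of_int x + 3\<rfloor>"
proof -
  obtain n where n: "1 \<le> n" "x = 2 * lower_wythoff n + n - 2"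
    using assms unfolding R_eq_image by blast
  then show "(h ^^ 2) x = x + 2"
    by (simp add: h_cycle eval_nat_numeral)
  show "(h ^^ 3) x = \<lfloor>phi * of_int x + 3\<rfloor>"
    using floor_phi_affine[of 0 x 3] n
    by (simp add: h_cycle eval_nat_numeral lower_wythoff_iterates)
qed

lemma h_powers_on_R_3_1:
  assumes "x \<in> R 3 1"
  shows "(h ^^ 2) x = \<lfloor>(2 - phi) * of_int x + 1\<rfloor>"
    and "(h ^^ 3) x = \<lfloor>(phi - 1) * of_int x + 1\<rfloor>"
proof -
  obtain n where n: "1 \<le> n" "x = 3 * lower_wythoff n + 2 * n - 1"
    using assms unfolding R_eq_image by blast
  moreover have "x \<noteq> 0"
    using n lower_wythoff_pos[of n] by simp
  ultimately show "(h ^^ 2) x = \<lfloor>(2 - phi) * of_int x + 1\<rfloor>"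
    using floor_affine_minus_phi[of x 2 1]
    by (simp add: h_cycle eval_nat_numeral lower_wythoff_iterates)
  show "(h ^^ 3) x = \<lfloor>(phi - 1) * of_int x + 1\<rfloor>"
    using floor_phi_affine[of "-1" x 1] n
    by (simp add: h_cycle eval_nat_numeral lower_wythoff_iterates)
qed

lemma Rperm_h: "Rperm h"
proof (rule Rperm_if_phi_affine_on_pieces)
  show "bij_betw h {1..} {1..}"
    using bij_betw_funpow_periodic[OF h_maps_pos h_periodic, of 1] by simp
  show "phi_affine_on (R 1 0) h"
    by (rule phi_affine_onI[where a = 1 and b = 0 and c = 0]) (simp add: h_on_pieces)
  show "phi_affine_on (R 2 0) h"
    by (rule phi_affine_onI[where a = 1 and b = 0 and c = 0]) (simp add: h_on_pieces)
  show "phi_affine_on (R 2 2) h"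
    by (rule phi_affine_onI[where a = 1 and b = "-1" and c = 2]) (simp add: h_on_pieces)
  show "phi_affine_on (R 3 1) h"
    by (rule phi_affine_onI[where a = 1 and b = "-1" and c = "-1"]) (simp add: h_on_pieces)
qed

lemma Rperm_h_funpow_2: "Rperm (h ^^ 2)"
proof (rule Rperm_if_phi_affine_on_pieces)
  show "bij_betw (h ^^ 2) {1..} {1..}"
    by (rule bij_betw_funpow_periodic[OF h_maps_pos h_periodic])
  show "phi_affine_on (R 1 0) (h ^^ 2)"
    by (rule phi_affine_onI[where a = 1 and b = 1 and c = "-1"]) (simp add: h_powers_on_R_1_0)
  show "phi_affine_on (R 2 0) (h ^^ 2)"
    by (rule phi_affine_onI[where a = 0 and b = 1 and c = "-2"]) (simp add: h_powers_on_R_2_0)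
  show "phi_affine_on (R 2 2) (h ^^ 2)"
    by (rule phi_affine_onI[where a = 0 and b = 1 and c = 2]) (simp add: h_powers_on_R_2_2)
  show "phi_affine_on (R 3 1) (h ^^ 2)"
    by (rule phi_affine_onI[where a = "-1" and b = 2 and c = 1]) (simp add: h_powers_on_R_3_1)
qed

lemma Rperm_h_funpow_3: "Rperm (h ^^ 3)"
proof (rule Rperm_if_phi_affine_on_pieces)
  show "bij_betw (h ^^ 3) {1..} {1..}"
    by (rule bij_betw_funpow_periodic[OF h_maps_pos h_periodic])
  show "phi_affine_on (R 1 0) (h ^^ 3)"
    by (rule phi_affine_onI[where a = 1 and b = 0 and c = "-2"]) (simp add: h_powers_on_R_1_0)
  show "phi_affine_on (R 2 0) (h ^^ 3)"
    by (rule phi_affine_onI[where a = 1 and b = "-1" and c = 1]) (simp add: h_powers_on_R_2_0)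
  show "phi_affine_on (R 2 2) (h ^^ 3)"
    by (rule phi_affine_onI[where a = 1 and b = 0 and c = 3]) (simp add: h_powers_on_R_2_2)
  show "phi_affine_on (R 3 1) (h ^^ 3)"
    by (rule phi_affine_onI[where a = 1 and b = "-1" and c = 1]) (simp add: h_powers_on_R_3_1)
qed

lemma h_values:
  "h 1 = 2" "h 2 = 3" "h 3 = 4" "h 4 = 1" "h 5 = 8"
  "h 6 = 5" "h 7 = 11" "h 8 = 12" "h 9 = 7" "h 10 = 16"
  using h_cycle[of 1] h_cycle[of 2] h_cycle[of 3] h_cycle[of 4] by (simp_all add: lower_wythoff_values)

theorem theorem4p3:
  shows "Rperm h
    \<and> (\<forall>n::int. n \<ge> 1 \<longrightarrow> (h ^^ 4) n = n)
    \<and> (\<forall>k\<in>{1, 2, 3::nat}. \<exists>n::int. n \<ge> 1 \<and> (h ^^ k) n \<noteq> n)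
    \<and> map h [1..10] = [2, 3, 4, 1, 8, 5, 11, 12, 7, 16]
    \<and> Rperm (h ^^ 2)
    \<and> (\<forall>n \<in> R 1 0. (h ^^ 2) n = \<lfloor>(phi + 1) * of_int n - 1\<rfloor>)
    \<and> (\<forall>n \<in> R 2 2. (h ^^ 2) n = n + 2)
    \<and> (\<forall>n \<in> R 2 0. (h ^^ 2) n = n - 2)
    \<and> (\<forall>n \<in> R 3 1. (h ^^ 2) n = \<lfloor>(2 - phi) * of_int n + 1\<rfloor>)
    \<and> Rperm (h ^^ 3)
    \<and> (\<forall>n::int. n \<ge> 1 \<longrightarrow> (h ^^ 3) n = inv_into {1..} h n)
    \<and> (\<forall>n \<in> R 2 2. (h ^^ 3) n = \<lfloor>phi * of_int n + 3\<rfloor>)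
    \<and> (\<forall>n \<in> R 1 0. (h ^^ 3) n = \<lfloor>phi * of_int n - 2\<rfloor>)
    \<and> (\<forall>n \<in> R 3 1 \<union> R 2 0. (h ^^ 3) n = \<lfloor>(phi - 1) * of_int n + 1\<rfloor>)"
proof (intro conjI)
  show "Rperm h" "Rperm (h ^^ 2)" "Rperm (h ^^ 3)"
    by (fact Rperm_h Rperm_h_funpow_2 Rperm_h_funpow_3)+
  show "\<forall>n::int. n \<ge> 1 \<longrightarrow> (h ^^ 4) n = n"
    using h_funpow_4 by blast
  show "\<forall>k\<in>{1, 2, 3::nat}. \<exists>n::int. n \<ge> 1 \<and> (h ^^ k) n \<noteq> n"
    using h_values by (auto intro!: exI[of _ 1] simp: eval_nat_numeral)
  show "map h [1..10] = [2, 3, 4, 1, 8, 5, 11, 12, 7, 16]"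
    by (simp add: upto.simps h_values)
  show "\<forall>n::int. n \<ge> 1 \<longrightarrow> (h ^^ 3) n = inv_into {1..} h n"
    using funpow_eq_inv_into_periodic[OF h_maps_pos h_periodic] by simp
  show "\<forall>n \<in> R 1 0. (h ^^ 2) n = \<lfloor>(phi + 1) * of_int n - 1\<rfloor>"
    "\<forall>n \<in> R 1 0. (h ^^ 3) n = \<lfloor>phi * of_int n - 2\<rfloor>"
    using h_powers_on_R_1_0 by blast+
  show "\<forall>n \<in> R 2 0. (h ^^ 2) n = n - 2"
    using h_powers_on_R_2_0 by blast
  show "\<forall>n \<in> R 2 2. (h ^^ 2) n = n + 2"
    "\<forall>n \<in> R 2 2. (h ^^ 3) n = \<lfloor>phi * of_int n + 3\<rfloor>"
    using h_powers_on_R_2_2 by blast+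
  show "\<forall>n \<in> R 3 1. (h ^^ 2) n = \<lfloor>(2 - phi) * of_int n + 1\<rfloor>"
    using h_powers_on_R_3_1 by blast
  show "\<forall>n \<in> R 3 1 \<union> R 2 0. (h ^^ 3) n = \<lfloor>(phi - 1) * of_int n + 1\<rfloor>"
    using h_powers_on_R_3_1(2) h_powers_on_R_2_0(2) by blast
qed

end
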